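(* Let $k=k(N)$ satisfy $k=o(N)$. There exists a constant $C>0$ such that for all $N$, all $j\in[N]$, all $y\in[N-1]$ and all $\sigma\in\mathcal S_N$, $$\big|(-\tilde{\mathcal L}\Phi^{(j)}_{N,y})(\sigma)-\lambda^{(j)}_{N,k}\,\Phi^{(j)}_{N,y}(\sigma)\big|\le C\,k^6 j^3 N^{-3}.$$
   Context: Decks, $\eta^{\sigma,i,j}$, and the generator $\tilde{\mathcal L}$ of the $S_k$ shuffle with boundaries: $\mathcal S_N$ is the symmetric group on $[N]$, $\eta(m)$ the label at position $m$; $\eta^{\sigma,i,j}$ rearranges positions $i,\dots,j$ by $\sigma\in\mathcal S_{j-i+1}$ ($\eta^{\sigma,i,j}(m)=\eta(i-1+\sigma(m-i+1))$ for $m\in[i,j]$, unchanged elsewhere); $(\mathcal Lf)(\eta)=\sum_{i=1}^{N-k+1}\frac1{k!}\sum_{\sigma\in\mathcal S_k}(f(\eta^{\sigma,i,i+k-1})-f(\eta))$; $\delta^{(k)}_j=\frac{k^2+3j^2-1}{(2j+1)(2j-1)}$ for $2\le j\le k-1$; $(\tilde{\mathcal L}f)(\zeta)=(\mathcal Lf)(\zeta)+\sum_{j=2}^{k-1}\frac{\delta^{(k)}_j}{j!}\sum_{\sigma\in\mathcal S_j}(f(\zeta^{\sigma,1,j})+f(\zeta^{\sigma,N-j+1,N})-2f(\zeta))$. Height function: $h_\sigma(x,y)=\sum_{z=1}^x\mathbf 1\{\sigma(z)\le y\}-\frac{xy}{N}$. Approximate eigenfunctions: $\Phi^{(j)}_{N,y}(\sigma)=\sum_{x=1}^{N-1}h_\sigma(x,y)\psi_j(x)$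 with $\psi_j(x)=\sin(xj\pi/N)$. Approximate eigenvalues: $\lambda^{(j)}_{N,k}=(k-1)-2\sum_{i=1}^{k}\frac{k-i}{k}\cos\!\big(\frac{ij\pi}{N}\big)$. *)

theory Defs
  imports "HOL-Analysis.Analysis" "HOL-Combinatorics.Permutations" "HOL-Library.Landau_Symbols"
begin

text \<open>Decks are functions nat \<Rightarrow> nat; a deck of size N is a permutation of {1..N}
  (eta m = label at position m). S_k = permutations of {1..k}.\<close>

definition rearr :: "(nat \<Rightarrow> nat) \<Rightarrow> (nat \<Rightarrow> nat) \<Rightarrow> nat \<Rightarrow> nat \<Rightarrow> (nat \<Rightarrow> nat)" where
  "rearr \<eta> \<sigma> i j = (\<lambda>m. if i \<le> m \<and> m \<le> j then \<eta> (i - 1 + \<sigma> (m + 1 - i)) else \<eta> m)"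

definition gen_L :: "nat \<Rightarrow> nat \<Rightarrow> ((nat \<Rightarrow> nat) \<Rightarrow> real) \<Rightarrow> (nat \<Rightarrow> nat) \<Rightarrow> real" where
  "gen_L N k f \<eta> = (\<Sum>i\<in>{i. 1 \<le> i \<and> i + k - 1 \<le> N}.
      (1 / fact k) * (\<Sum>\<sigma>\<in>{\<sigma>. \<sigma> permutes {1..k}}. f (rearr \<eta> \<sigma> i (i + k - 1)) - f \<eta>))"

definition delta :: "nat \<Rightarrow> nat \<Rightarrow> real" where
  "delta k j = (real k ^ 2 + 3 * real j ^ 2 - 1) / ((2 * real j + 1) * (2 * real j - 1))"

definition gen_Lt :: "nat \<Rightarrow> nat \<Rightarrow> ((nat \<Rightarrow> nat) \<Rightarrow> real) \<Rightarrow> (nat \<Rightarrow> nat) \<Rightarrow> real" where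
  "gen_Lt N k f \<zeta> = gen_L N k f \<zeta> +
     (\<Sum>j = 2..k - 1. delta k j / fact j *
        (\<Sum>\<sigma>\<in>{\<sigma>. \<sigma> permutes {1..j}}.
            f (rearr \<zeta> \<sigma> 1 j) + f (rearr \<zeta> \<sigma> (N - j + 1) N) - 2 * f \<zeta>))"

definition height :: "nat \<Rightarrow> (nat \<Rightarrow> nat) \<Rightarrow> nat \<Rightarrow> nat \<Rightarrow> real" where
  "height N \<sigma> x y = (\<Sum>z = 1..x. if \<sigma> z \<le> y then 1 else 0) - real x * real y / real N"

definition Phi :: "nat \<Rightarrow> nat \<Rightarrow> nat \<Rightarrow> (nat \<Rightarrow> nat) \<Rightarrow> real" where
  "Phi N j y \<sigma> = (\<Sum>x = 1..N - 1. height N \<sigma> x y * sin (real x * real j * pi / real N))"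

definition eigval :: "nat \<Rightarrow> nat \<Rightarrow> nat \<Rightarrow> real" where
  "eigval N k j = (real k - 1) - 2 * (\<Sum>i = 1..k. (real k - real i) / real k * cos (real i * real j * pi / real N))"

end

theory Submission
  imports Defs
begin

text \<open>Averaging over all rearrangements of a window of consecutive positions makes the
  indicators inside the window uniform, so it replaces the height function on the window by
  its linear interpolation. Applying the generator to \<open>\<Phi>\<close> therefore produces a sum over
  windows of sine-weighted interpolation defects. Summation by parts turns the bulk of this sum
  into \<open>(k - 1 - \<lambda>) \<Phi>\<close>, the eigenvalue coming from
  \<open>sin ((x + s) \<theta>) + sin ((x - s) \<theta>) = 2 sin (x \<theta>) cos (s \<theta>)\<close>; what is left are two edge
  terms, the right one being the reflection of the left one because \<open>sin (N \<theta>) = 0\<close>.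
  The edge term is linear in the weight, and the boundary rates \<open>\<delta>\<^sub>j\<close> are exactly those
  for which it vanishes on the weight \<open>t \<mapsto> t\<close>. Only the cubic Taylor remainder of
  \<open>sin (t \<theta>)\<close> survives, and since the height at distance \<open>x\<close> from an edge is at most \<open>x\<close>,
  the edge term is \<open>O(k\<^sup>6 \<theta>\<^sup>3)\<close>. The finitely many \<open>N\<close> with \<open>k N > N\<close> only enlarge the constant.\<close>

section \<open>Averaging a window over its rearrangements\<close>

lemma sum_permutations_apply:
  fixes f :: "'a \<Rightarrow> real"
  assumes "finite S" and "t \<in> S"
  shows "real (card S) * (\<Sum>\<sigma>\<in>{\<sigma>. \<sigma> permutes S}. f (\<sigma> t)) = fact (card S) * (\<Sum>u\<in>S. f u)"
proof -
  let ?P = "{\<sigma>. \<sigma> permutes S}"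
  have independent: "(\<Sum>\<sigma>\<in>?P. f (\<sigma> t')) = (\<Sum>\<sigma>\<in>?P. f (\<sigma> t))" if "t' \<in> S" for t'
    using sum_permutations_compose_right[OF permutes_swap_id[OF \<open>t \<in> S\<close> that], of "\<lambda>\<sigma>. f (\<sigma> t)"]
    by simp
  have "real (card S) * (\<Sum>\<sigma>\<in>?P. f (\<sigma> t)) = (\<Sum>t'\<in>S. \<Sum>\<sigma>\<in>?P. f (\<sigma> t'))"
    by (simp add: independent)
  also have "\<dots> = (\<Sum>\<sigma>\<in>?P. \<Sum>t'\<in>S. f (\<sigma> t'))"
    by (rule sum.swap)
  also have "\<dots> = (\<Sum>\<sigma>\<in>?P. \<Sum>u\<in>S. f u)"
  proof (rule sum.cong)
    fix \<sigma> assume "\<sigma> \<in> ?P"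
    then show "(\<Sum>t'\<in>S. f (\<sigma> t')) = (\<Sum>u\<in>S. f u)"
      using sum.permute[of \<sigma> S f] by (simp add: comp_def)
  qed simp
  also have "\<dots> = fact (card S) * (\<Sum>u\<in>S. f u)"
    using card_permutations[OF refl \<open>finite S\<close>] by simp
  finally show ?thesis .
qed

lemma rearr_shifted:
  "rearr \<eta> \<sigma> (Suc p) (p + n) z = (if p < z \<and> z \<le> p + n then \<eta> (p + \<sigma> (z - p)) else \<eta> z)"
  by (auto simp: rearr_def)

lemma average_rearr_apply:
  fixes f :: "nat \<Rightarrow> real"
  assumes "1 \<le> n"
  shows "(1 / fact n) * (\<Sum>\<sigma>\<in>{\<sigma>. \<sigma> permutes {1..n}}. f (rearr \<eta> \<sigma> (Suc p) (p + n) z))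
    = (if p < z \<and> z \<le> p + n then (\<Sum>u=1..n. f (\<eta> (p + u))) / real n else f (\<eta> z))"
proof (cases "p < z \<and> z \<le> p + n")
  case True
  then have "z - p \<in> {1..n}" by auto
  have "(\<Sum>\<sigma>\<in>{\<sigma>. \<sigma> permutes {1..n}}. f (rearr \<eta> \<sigma> (Suc p) (p + n) z))
      = (\<Sum>\<sigma>\<in>{\<sigma>. \<sigma> permutes {1..n}}. f (\<eta> (p + \<sigma> (z - p))))"
    using True by (simp add: rearr_shifted)
  with sum_permutations_apply[OF _ \<open>z - p \<in> {1..n}\<close>, of "\<lambda>u. f (\<eta> (p + u))"]
  show ?thesis
    using True assms by (simp add: field_simps)
next
  case False
  then have "(\<Sum>\<sigma>\<in>{\<sigma>. \<sigma> permutes {1..n}}. f (rearr \<eta> \<sigma> (Suc p) (p + n) z))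
      = (\<Sum>\<sigma>\<in>{\<sigma>. \<sigma> permutes {1..n}}. f (\<eta> z))"
    by (intro sum.cong) (auto simp: rearr_shifted)
  then show ?thesis
    using False by (simp only: if_False) (simp add: card_permutations)
qed

definition prefix_count :: "(nat \<Rightarrow> nat) \<Rightarrow> nat \<Rightarrow> nat \<Rightarrow> real" where
  "prefix_count \<eta> y x = (\<Sum>z=1..x. if \<eta> z \<le> y then 1 else 0)"

lemma height_eq_prefix_count: "height N \<eta> x y = prefix_count \<eta> y x - real x * real y / real N"
  by (simp add: height_def prefix_count_def)

lemma sum_shift_add:
  fixes a :: "nat \<Rightarrow> 'a::comm_monoid_add"
  shows "(\<Sum>z=1..p+u. a z) = (\<Sum>z=1..p. a z) + (\<Sum>v=1..u. a (p + v))"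
  by (induction u) (simp_all add: add.assoc)

lemma sum_block_averaged:
  fixes a :: "nat \<Rightarrow> real"
  assumes avg: "real n * m = (\<Sum>v=1..n. a (p + v))"
  shows "(\<Sum>z=1..x. if p < z \<and> z \<le> p + n then m else a z)
    = (if p \<le> x \<and> x \<le> p + n then (\<Sum>z=1..p. a z) + real (x - p) * m else (\<Sum>z=1..x. a z))"
proof (induction x)
  case (Suc x)
  consider "Suc x \<le> p" | "x = p" | "p < x" "x < p + n" | "x = p + n" | "p + n < x"
    by linarith
  then show ?case
  proof cases
    case 4
    then show ?thesis
      using Suc avg sum_shift_add[of a p n] by (cases "n = 0") (simp_all add: algebra_simps)
  qed (use Suc in \<open>auto simp: Suc_diff_le algebra_simps\<close>)
qed simp

lemma average_prefix_count_rearr: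
  assumes "1 \<le> n"
  shows "(1 / fact n) * (\<Sum>\<sigma>\<in>{\<sigma>. \<sigma> permutes {1..n}}. prefix_count (rearr \<eta> \<sigma> (Suc p) (p + n)) y x)
    = (if p \<le> x \<and> x \<le> p + n
       then prefix_count \<eta> y p + real (x - p) / real n * (prefix_count \<eta> y (p + n) - prefix_count \<eta> y p)
       else prefix_count \<eta> y x)"
proof -
  define ind where "ind l = (if l \<le> y then 1 else 0 :: real)" for l
  define m where "m = (\<Sum>v=1..n. ind (\<eta> (p + v))) / real n"
  have avg: "real n * m = (\<Sum>v=1..n. ind (\<eta> (p + v)))"
    using assms by (simp add: m_def)
  have count: "prefix_count \<zeta> y x = (\<Sum>z=1..x. ind (\<zeta> z))" for \<zeta> x
    by (simp add: prefix_count_def ind_def)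
  have window: "prefix_count \<eta> y (p + n) - prefix_count \<eta> y p = real n * m"
    unfolding avg count using sum_shift_add[of "\<lambda>z. ind (\<eta> z)" p n] by simp
  have "(1 / fact n) * (\<Sum>\<sigma>\<in>{\<sigma>. \<sigma> permutes {1..n}}. prefix_count (rearr \<eta> \<sigma> (Suc p) (p + n)) y x)
      = (\<Sum>z=1..x. (1 / fact n) * (\<Sum>\<sigma>\<in>{\<sigma>. \<sigma> permutes {1..n}}. ind (rearr \<eta> \<sigma> (Suc p) (p + n) z)))"
    unfolding count by (simp add: sum_distrib_left) (rule sum.swap)
  also have "\<dots> = (\<Sum>z=1..x. if p < z \<and> z \<le> p + n then m else ind (\<eta> z))"
    unfolding average_rearr_apply[OF assms] m_def ..
  also have "\<dots> = (if p \<le> x \<and> x \<le> p + n then prefix_count \<eta> y p + real (x - p) * m else prefix_count \<eta> y x)"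
    unfolding sum_block_averaged[OF avg] count ..
  finally show ?thesis
    using assms window by (simp add: field_simps)
qed

definition window_defect :: "(real \<Rightarrow> real) \<Rightarrow> nat \<Rightarrow> nat \<Rightarrow> (nat \<Rightarrow> real) \<Rightarrow> real" where
  "window_defect \<psi> n p g = (\<Sum>s=1..n-1. \<psi> (real (p + s)) *
      ((1 - real s / real n) * g p + real s / real n * g (p + n) - g (p + s)))"

lemma interpolation_defect_height:
  assumes "s \<le> n" and "0 < n"
  shows "(1 - real s / real n) * height N \<eta> p y + real s / real n * height N \<eta> (p + n) y - height N \<eta> (p + s) y
    = prefix_count \<eta> y p + real s / real n * (prefix_count \<eta> y (p + n) - prefix_count \<eta> y p)
      - prefix_count \<eta> y (p + s)"
  using assms unfolding height_eq_prefix_count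
  by (simp add: field_simps) (simp add: add_divide_distrib[symmetric] diff_divide_distrib[symmetric] algebra_simps)

lemma average_Phi_rearr:
  assumes "1 \<le> n" and "p + n \<le> N"
  shows "(1 / fact n) * (\<Sum>\<sigma>\<in>{\<sigma>. \<sigma> permutes {1..n}}. Phi N j y (rearr \<eta> \<sigma> (Suc p) (p + n)) - Phi N j y \<eta>)
    = window_defect (\<lambda>t. sin (t * real j * pi / real N)) n p (\<lambda>x. height N \<eta> x y)"
proof -
  let ?P = "{\<sigma>. \<sigma> permutes {1..n}}"
  let ?\<psi> = "\<lambda>t. sin (t * real j * pi / real N)"
  let ?c = "prefix_count \<eta> y"
  define D where "D x = (1 / fact n) * (\<Sum>\<sigma>\<in>?P. prefix_count (rearr \<eta> \<sigma> (Suc p) (p + n)) y x) - ?c x" for x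
  have D_outside: "D x = 0" if "x \<notin> {p + 1..p + n - 1}" for x
    using that assms unfolding D_def average_prefix_count_rearr[OF \<open>1 \<le> n\<close>]
    by (cases "x = p + n"; cases "x = p") auto
  have D_inside: "D (p + s) = (1 - real s / real n) * height N \<eta> p y
      + real s / real n * height N \<eta> (p + n) y - height N \<eta> (p + s) y" if "s \<in> {1..n - 1}" for s
    using that assms unfolding D_def average_prefix_count_rearr[OF \<open>1 \<le> n\<close>]
    by (subst interpolation_defect_height) auto
  have Phi_diff: "Phi N j y \<zeta> - Phi N j y \<eta> = (\<Sum>x=1..N-1. (prefix_count \<zeta> y x - ?c x) * ?\<psi> (real x))" for \<zeta>
    unfolding Phi_def height_eq_prefix_count by (simp add: sum_subtractf[symmetric] algebra_simps)
  have "(1 / fact n) * (\<Sum>\<sigma>\<in>?P. Phi N j y (rearr \<eta> \<sigma> (Suc p) (p + n)) - Phi N j y \<eta>)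
      = (\<Sum>x=1..N-1. D x * ?\<psi> (real x))"
    unfolding Phi_diff D_def sum_distrib_left
    by (subst sum.swap) (simp add: sum_subtractf card_permutations sum_distrib_left sum_divide_distrib algebra_simps)
  also have "\<dots> = (\<Sum>x=p+1..p+(n-1). D x * ?\<psi> (real x))"
    using assms D_outside by (intro sum.mono_neutral_right) auto
  also have "\<dots> = (\<Sum>s=1..n-1. D (p + s) * ?\<psi> (real (p + s)))"
    using sum.shift_bounds_cl_nat_ivl[of "\<lambda>x. D x * ?\<psi> (real x)" 1 p "n - 1"]
    by (simp add: add.commute)
  also have "\<dots> = window_defect ?\<psi> n p (\<lambda>x. height N \<eta> x y)"
    unfolding window_defect_def by (intro sum.cong refl) (simp add: D_inside)
  finally show ?thesis .
qed

lemma gen_Lt_Phi_eq_window_defects: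
  fixes j y :: nat and \<eta> :: "nat \<Rightarrow> nat"
  assumes "1 \<le> k" and "k \<le> N"
  defines "\<psi> \<equiv> \<lambda>t. sin (t * real j * pi / real N)" and "g \<equiv> \<lambda>x. height N \<eta> x y"
  shows "gen_Lt N k (Phi N j y) \<eta> = (\<Sum>p=0..N-k. window_defect \<psi> k p g)
     + (\<Sum>i=2..k-1. delta k i * (window_defect \<psi> i 0 g + window_defect \<psi> i (N - i) g))"
proof -
  let ?avg = "\<lambda>n a. (1 / fact n) * (\<Sum>\<sigma>\<in>{\<sigma>. \<sigma> permutes {1..n}}. Phi N j y (rearr \<eta> \<sigma> (Suc a) (a + n)) - Phi N j y \<eta>)"
  have "gen_L N k (Phi N j y) \<eta> = (\<Sum>i=Suc 0..Suc (N-k). (1 / fact k) *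
      (\<Sum>\<sigma>\<in>{\<sigma>. \<sigma> permutes {1..k}}. Phi N j y (rearr \<eta> \<sigma> i (i + k - 1)) - Phi N j y \<eta>))"
    unfolding gen_L_def using assms(1,2) by (intro sum.cong) auto
  also have "\<dots> = (\<Sum>p=0..N-k. ?avg k p)"
    unfolding sum.shift_bounds_cl_Suc_ivl by simp
  also have "\<dots> = (\<Sum>p=0..N-k. window_defect \<psi> k p g)"
    using assms average_Phi_rearr[OF \<open>1 \<le> k\<close>] by (intro sum.cong) auto
  finally have bulk: "gen_L N k (Phi N j y) \<eta> = (\<Sum>p=0..N-k. window_defect \<psi> k p g)" .
  have edges: "delta k i / fact i * (\<Sum>\<sigma>\<in>{\<sigma>. \<sigma> permutes {1..i}}.
        Phi N j y (rearr \<eta> \<sigma> 1 i) + Phi N j y (rearr \<eta> \<sigma> (N - i + 1) N) - 2 * Phi N j y \<eta>)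
      = delta k i * (window_defect \<psi> i 0 g + window_defect \<psi> i (N - i) g)" if "i \<in> {2..k-1}" for i
  proof -
    let ?S = "\<lambda>a b. \<Sum>\<sigma>\<in>{\<sigma>. \<sigma> permutes {1..i}}. Phi N j y (rearr \<eta> \<sigma> a b) - Phi N j y \<eta>"
    have "1 \<le> i" "i \<le> N" using that assms(2) by auto
    then have w: "window_defect \<psi> i 0 g = (1 / fact i) * ?S 1 i"
      "window_defect \<psi> i (N - i) g = (1 / fact i) * ?S (N - i + 1) N"
      using average_Phi_rearr[of i 0 N] average_Phi_rearr[of i "N - i" N] unfolding \<psi>_def g_def by auto
    have split: "(\<Sum>\<sigma>\<in>{\<sigma>. \<sigma> permutes {1..i}}.
        Phi N j y (rearr \<eta> \<sigma> 1 i) + Phi N j y (rearr \<eta> \<sigma> (N - i + 1) N) - 2 * Phi N j y \<eta>)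
      = ?S 1 i + ?S (N - i + 1) N"
      by (simp add: sum.distrib[symmetric] algebra_simps)
    show ?thesis
      unfolding split w by (simp add: field_simps)
  qed
  show ?thesis
    unfolding gen_Lt_def bulk using edges by simp
qed

section \<open>Summation by parts\<close>

definition right_kernel :: "(real \<Rightarrow> real) \<Rightarrow> nat \<Rightarrow> nat \<Rightarrow> real" where
  "right_kernel \<psi> k x = (\<Sum>s=1..k-1. (1 - real s / real k) * \<psi> (real x + real s))"

definition left_kernel :: "(real \<Rightarrow> real) \<Rightarrow> nat \<Rightarrow> nat \<Rightarrow> real" where
  "left_kernel \<psi> k x = (\<Sum>s=1..k-1. (1 - real s / real k) * \<psi> (real x - real s))"

lemma sum_reverse:
  fixes f :: "nat \<Rightarrow> 'a::comm_monoid_add"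
  shows "(\<Sum>s=1..n-1. f s) = (\<Sum>s=1..n-1. f (n - s))"
  by (rule sum.reindex_bij_witness[where i = "\<lambda>s. n - s" and j = "\<lambda>s. n - s"]) auto

lemma left_kernel_reversed:
  assumes "1 \<le> k"
  shows "left_kernel \<psi> k x = (\<Sum>s=1..k-1. real s / real k * \<psi> (real x - real k + real s))"
proof -
  have "left_kernel \<psi> k x = (\<Sum>s=1..k-1. (1 - real (k - s) / real k) * \<psi> (real x - real (k - s)))"
    unfolding left_kernel_def by (rule sum_reverse)
  also have "\<dots> = (\<Sum>s=1..k-1. real s / real k * \<psi> (real x - real k + real s))"
    using assms by (intro sum.cong refl) (subst of_nat_diff; auto simp: field_simps)
  finally show ?thesis .
qed

lemma window_defect_expand:
  assumes "1 \<le> k"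
  shows "window_defect \<psi> k p g = g p * right_kernel \<psi> k p + g (p + k) * left_kernel \<psi> k (p + k)
    - (\<Sum>s=1..k-1. \<psi> (real (p + s)) * g (p + s))"
  unfolding window_defect_def right_kernel_def left_kernel_reversed[OF assms]
    sum_distrib_left sum.distrib[symmetric] sum_subtractf[symmetric]
  by (intro sum.cong refl) (simp add: algebra_simps)

lemma sum_split_at:
  fixes f :: "nat \<Rightarrow> 'a::comm_monoid_add"
  assumes "a \<le> b + 1" and "b \<le> c"
  shows "(\<Sum>x=a..c. f x) = (\<Sum>x=a..b. f x) + (\<Sum>x=b+1..c. f x)"
proof -
  have "{a..c} = {a..b} \<union> {b+1..c}" using assms by auto
  then show ?thesis by (simp add: sum.union_disjoint)
qed

lemma sum_window_defects:
  assumes "g 0 = 0" and "g N = 0" and "1 \<le> k" and "k \<le> N"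
  shows "(\<Sum>p=0..N-k. window_defect \<psi> k p g)
    = (\<Sum>x=1..N-k. g x * right_kernel \<psi> k x) + (\<Sum>x=k..N-1. g x * left_kernel \<psi> k x)
      - (\<Sum>s=1..k-1. \<Sum>x=s..N-k+s. \<psi> (real x) * g x)"
proof -
  have "(\<Sum>p=0..N-k. g p * right_kernel \<psi> k p) = (\<Sum>x=1..N-k. g x * right_kernel \<psi> k x)"
    using sum.atLeast_Suc_atMost[of 0 "N - k" "\<lambda>x. g x * right_kernel \<psi> k x"] assms(1) by simp
  moreover have "(\<Sum>p=0..N-k. g (p + k) * left_kernel \<psi> k (p + k)) = (\<Sum>x=k..N-1. g x * left_kernel \<psi> k x)"
    using sum.shift_bounds_cl_nat_ivl[of "\<lambda>x. g x * left_kernel \<psi> k x" 0 k "N - k"]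
      sum_split_at[of k "N - 1" N "\<lambda>x. g x * left_kernel \<psi> k x"] assms(2-4) by simp
  moreover have "(\<Sum>p=0..N-k. \<Sum>s=1..k-1. \<psi> (real (p + s)) * g (p + s))
      = (\<Sum>s=1..k-1. \<Sum>x=s..N-k+s. \<psi> (real x) * g x)"
    unfolding sum.swap[where A = "{0..N-k}"]
    using sum.shift_bounds_cl_nat_ivl[of "\<lambda>x. \<psi> (real x) * g x" 0 _ "N - k"] by simp
  ultimately show ?thesis
    unfolding window_defect_expand[OF assms(3)] by (simp add: sum.distrib sum_subtractf)
qed

definition eigval_angle :: "nat \<Rightarrow> real \<Rightarrow> real" where
  "eigval_angle k \<theta> = real k - 1 - 2 * (\<Sum>i=1..k. (real k - real i) / real k * cos (real i * \<theta>))"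

lemma kernels_sin:
  assumes "1 \<le> k"
  shows "right_kernel (\<lambda>t. sin (t * \<theta>)) k x + left_kernel (\<lambda>t. sin (t * \<theta>)) k x
    = (real k - 1 - eigval_angle k \<theta>) * sin (real x * \<theta>)"
proof -
  have "right_kernel (\<lambda>t. sin (t * \<theta>)) k x + left_kernel (\<lambda>t. sin (t * \<theta>)) k x
      = (\<Sum>s=1..k-1. (1 - real s / real k) * (2 * sin (real x * \<theta>) * cos (real s * \<theta>)))"
    unfolding right_kernel_def left_kernel_def sum.distrib[symmetric]
    by (intro sum.cong refl) (simp add: algebra_simps sin_add sin_diff)
  also have "\<dots> = 2 * (\<Sum>i=1..k-1. (real k - real i) / real k * cos (real i * \<theta>)) * sin (real x * \<theta>)"
    unfolding sum_distrib_left sum_distrib_right using assms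
    by (intro sum.cong refl) (simp add: field_simps)
  also have "(\<Sum>i=1..k-1. (real k - real i) / real k * cos (real i * \<theta>))
      = (\<Sum>i=1..k. (real k - real i) / real k * cos (real i * \<theta>))"
    using assms sum.cl_ivl_Suc[of "\<lambda>i. (real k - real i) / real k * cos (real i * \<theta>)" 1 "k - 1"] by simp
  finally show ?thesis
    unfolding eigval_angle_def by simp
qed

lemma sin_reflect:
  assumes "sin (real N * \<theta>) = 0"
  shows "sin ((real N - r) * \<theta>) = - cos (real N * \<theta>) * sin (r * \<theta>)"
  using assms by (simp add: left_diff_distrib sin_diff)

lemma sum_reflect:
  fixes f :: "nat \<Rightarrow> 'a::comm_monoid_add"
  assumes "a \<le> N" and "b \<le> N"
  shows "(\<Sum>x=N-b..N-a. f x) = (\<Sum>u=a..b. f (N - u))"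
  by (rule sum.reindex_bij_witness[where i = "\<lambda>u. N - u" and j = "\<lambda>x. N - x"]) (use assms in auto)

text \<open>What summation by parts leaves at the left edge, including the boundary rates.\<close>

definition edge_defect :: "(real \<Rightarrow> real) \<Rightarrow> nat \<Rightarrow> (nat \<Rightarrow> real) \<Rightarrow> real" where
  "edge_defect \<psi> k G = (\<Sum>x=1..k-1. G x * left_kernel \<psi> k x)
     - (\<Sum>s=1..k-1. \<Sum>x=1..s-1. \<psi> (real x) * G x)
     - (\<Sum>i=2..k-1. delta k i * window_defect \<psi> i 0 G)"

lemma window_defect_reflect:
  assumes "sin (real N * \<theta>) = 0" and "g N = 0" and "i \<le> N"
  shows "window_defect (\<lambda>t. sin (t * \<theta>)) i (N - i) g
    = - cos (real N * \<theta>) * window_defect (\<lambda>t. sin (t * \<theta>)) i 0 (\<lambda>u. g (N - u))"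
proof -
  have "window_defect (\<lambda>t. sin (t * \<theta>)) i (N - i) g = (\<Sum>s=1..i-1. sin (real (N - i + (i - s)) * \<theta>) *
      ((1 - real (i - s) / real i) * g (N - i) + real (i - s) / real i * g (N - i + i) - g (N - i + (i - s))))"
    unfolding window_defect_def by (rule sum_reverse)
  also have "\<dots> = (\<Sum>s=1..i-1. - cos (real N * \<theta>) * (sin (real s * \<theta>) *
      ((1 - real s / real i) * g N + real s / real i * g (N - i) - g (N - s))))"
  proof (intro sum.cong refl)
    fix s assume "s \<in> {1..i-1}"
    then have idx: "N - i + (i - s) = N - s" "N - i + i = N" "real (i - s) = real i - real s" "real i \<noteq> 0"
      using assms(3) by (auto simp: of_nat_diff)
    have "sin (real (N - s) * \<theta>) = - cos (real N * \<theta>) * sin (real s * \<theta>)"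
      using \<open>s \<in> {1..i-1}\<close> assms(3) sin_reflect[OF assms(1), of "real s"] by (auto simp: of_nat_diff)
    then show "sin (real (N - i + (i - s)) * \<theta>) *
        ((1 - real (i - s) / real i) * g (N - i) + real (i - s) / real i * g (N - i + i) - g (N - i + (i - s)))
      = - cos (real N * \<theta>) * (sin (real s * \<theta>) *
        ((1 - real s / real i) * g N + real s / real i * g (N - i) - g (N - s)))"
      unfolding idx using assms(2) idx(4) by (simp add: field_simps)
  qed
  also have "\<dots> = - cos (real N * \<theta>) * window_defect (\<lambda>t. sin (t * \<theta>)) i 0 (\<lambda>u. g (N - u))"
    unfolding window_defect_def sum_distrib_left by simp
  finally show ?thesis .
qed

lemma right_kernel_reflect:
  assumes "sin (real N * \<theta>) = 0" and "u \<le> N"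
  shows "right_kernel (\<lambda>t. sin (t * \<theta>)) k (N - u) = - cos (real N * \<theta>) * left_kernel (\<lambda>t. sin (t * \<theta>)) k u"
proof -
  have "sin ((real (N - u) + real s) * \<theta>) = - cos (real N * \<theta>) * sin ((real u - real s) * \<theta>)" for s
    using sin_reflect[OF assms(1), of "real u - real s"] assms(2) by (simp add: of_nat_diff algebra_simps)
  then show ?thesis
    unfolding right_kernel_def left_kernel_def sum_distrib_left by (simp add: algebra_simps)
qed

lemma right_edge_reflect:
  fixes g :: "nat \<Rightarrow> real"
  assumes sin_N: "sin (real N * \<theta>) = 0" and "g N = 0" and "1 \<le> k" and "k \<le> N"
  defines "\<psi> \<equiv> \<lambda>t. sin (t * \<theta>)"
  shows "(\<Sum>x=N-k+1..N-1. g x * right_kernel \<psi> k x)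
     - (\<Sum>s=1..k-1. \<Sum>x=N-k+s+1..N-1. \<psi> (real x) * g x)
     - (\<Sum>i=2..k-1. delta k i * window_defect \<psi> i (N - i) g)
     = - cos (real N * \<theta>) * edge_defect \<psi> k (\<lambda>u. g (N - u))"
proof -
  let ?c = "- cos (real N * \<theta>)"
  let ?G = "\<lambda>u. g (N - u)"
  have \<psi>_reflect: "\<psi> (real N - r) = ?c * \<psi> r" for r
    unfolding \<psi>_def by (rule sin_reflect[OF sin_N])
  have "(\<Sum>x=N-k+1..N-1. g x * right_kernel \<psi> k x) = (\<Sum>u=1..k-1. ?G u * right_kernel \<psi> k (N - u))"
    using sum_reflect[of 1 N "k - 1" "\<lambda>x. g x * right_kernel \<psi> k x"] assms(3,4) by (simp add: Suc_diff_le)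
  also have "\<dots> = ?c * (\<Sum>u=1..k-1. ?G u * left_kernel \<psi> k u)"
    unfolding sum_distrib_left \<psi>_def using assms(4)
    by (intro sum.cong refl, subst right_kernel_reflect[OF sin_N]) auto
  finally have kernel: "(\<Sum>x=N-k+1..N-1. g x * right_kernel \<psi> k x) = ?c * (\<Sum>u=1..k-1. ?G u * left_kernel \<psi> k u)" .
  have inner: "(\<Sum>x=N-k+s+1..N-1. \<psi> (real x) * g x) = ?c * (\<Sum>u=1..k-1-s. \<psi> (real u) * ?G u)"
    if "s \<in> {1..k-1}" for s
  proof -
    have "N - k + s + 1 = N - (k - 1 - s)"
      using that assms(4) by auto
    then have "(\<Sum>x=N-k+s+1..N-1. \<psi> (real x) * g x) = (\<Sum>u=1..k-1-s. \<psi> (real N - real u) * g (N - u))"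
      using sum_reflect[of 1 N "k - 1 - s" "\<lambda>x. \<psi> (real x) * g x"] that assms(4) by auto
    also have "\<dots> = ?c * (\<Sum>u=1..k-1-s. \<psi> (real u) * ?G u)"
      unfolding sum_distrib_left \<psi>_reflect by (simp add: algebra_simps)
    finally show ?thesis .
  qed
  have "(\<Sum>s=1..k-1. \<Sum>x=N-k+s+1..N-1. \<psi> (real x) * g x)
      = (\<Sum>s=1..k-1. ?c * (\<Sum>u=1..k-1-s. \<psi> (real u) * ?G u))"
    by (rule sum.cong[OF refl], rule inner)
  also have "\<dots> = ?c * (\<Sum>s=1..k-1. \<Sum>u=1..k-1-s. \<psi> (real u) * ?G u)"
    by (rule sum_distrib_left[symmetric])
  also have "(\<Sum>s=1..k-1. \<Sum>u=1..k-1-s. \<psi> (real u) * ?G u) = (\<Sum>s=1..k-1. \<Sum>u=1..s-1. \<psi> (real u) * ?G u)"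
    by (subst sum_reverse) (intro sum.cong refl; auto)
  finally have triangle: "(\<Sum>s=1..k-1. \<Sum>x=N-k+s+1..N-1. \<psi> (real x) * g x)
      = ?c * (\<Sum>s=1..k-1. \<Sum>u=1..s-1. \<psi> (real u) * ?G u)" .
  have edges: "(\<Sum>i=2..k-1. delta k i * window_defect \<psi> i (N - i) g)
      = ?c * (\<Sum>i=2..k-1. delta k i * window_defect \<psi> i 0 ?G)"
    unfolding sum_distrib_left \<psi>_def
    using window_defect_reflect[where N = N and \<theta> = \<theta> and g = g, OF sin_N \<open>g N = 0\<close>] assms(4)
    by (intro sum.cong refl) auto
  show ?thesis
    unfolding kernel triangle edges edge_defect_def by (simp add: algebra_simps)
qed

lemma sum_sliding_windows:
  fixes M :: "nat \<Rightarrow> real"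
  assumes "1 \<le> k" and "k \<le> N"
  shows "(\<Sum>s=1..k-1. \<Sum>x=s..N-k+s. M x) = (real k - 1) * (\<Sum>x=1..N-1. M x)
    - (\<Sum>s=1..k-1. \<Sum>x=1..s-1. M x) - (\<Sum>s=1..k-1. \<Sum>x=N-k+s+1..N-1. M x)"
proof -
  let ?S = "\<Sum>x=1..N-1. M x"
  have "(\<Sum>x=s..N-k+s. M x) = ?S - (\<Sum>x=1..s-1. M x) - (\<Sum>x=N-k+s+1..N-1. M x)"
    if s: "s \<in> {1..k-1}" for s
  proof -
    have "?S = (\<Sum>x=1..s-1. M x) + (\<Sum>x=s..N-1. M x)"
      using sum_split_at[of 1 "s - 1" "N - 1" M] s assms(2) by force
    also have "(\<Sum>x=s..N-1. M x) = (\<Sum>x=s..N-k+s. M x) + (\<Sum>x=N-k+s+1..N-1. M x)"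
      by (rule sum_split_at) (use s assms(2) in auto)
    finally show ?thesis
      by simp
  qed
  then have "(\<Sum>s=1..k-1. \<Sum>x=s..N-k+s. M x)
      = (\<Sum>s=1..k-1. ?S - (\<Sum>x=1..s-1. M x) - (\<Sum>x=N-k+s+1..N-1. M x))"
    by (rule sum.cong[OF refl])
  moreover have "real (k - 1) = real k - 1"
    using assms(1) by (simp add: of_nat_diff)
  ultimately show ?thesis
    by (simp add: sum_subtractf)
qed

lemma window_defects_eigen_error:
  fixes g :: "nat \<Rightarrow> real"
  assumes sin_N: "sin (real N * \<theta>) = 0" and g0: "g 0 = 0" and gN: "g N = 0"
    and k: "1 \<le> k" and kN: "k \<le> N"
  defines "\<psi> \<equiv> \<lambda>t. sin (t * \<theta>)"
  shows "- ((\<Sum>p=0..N-k. window_defect \<psi> k p g)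
        + (\<Sum>i=2..k-1. delta k i * (window_defect \<psi> i 0 g + window_defect \<psi> i (N - i) g)))
      - eigval_angle k \<theta> * (\<Sum>x=1..N-1. g x * \<psi> (real x))
    = edge_defect \<psi> k g - cos (real N * \<theta>) * edge_defect \<psi> k (\<lambda>u. g (N - u))"
proof -
  define P where "P x = g x * right_kernel \<psi> k x" for x
  define Q where "Q x = g x * left_kernel \<psi> k x" for x
  define M where "M x = \<psi> (real x) * g x" for x
  define S where "S = (\<Sum>x=1..N-1. M x)"
  have split_P: "(\<Sum>x=1..N-1. P x) = (\<Sum>x=1..N-k. P x) + (\<Sum>x=N-k+1..N-1. P x)"
    by (rule sum_split_at) (use k kN in auto)
  have split_Q: "(\<Sum>x=1..N-1. Q x) = (\<Sum>x=1..k-1. Q x) + (\<Sum>x=k..N-1. Q x)"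
    using sum_split_at[of 1 "k - 1" "N - 1" Q] k kN by simp
  have kernels: "(\<Sum>x=1..N-1. P x) + (\<Sum>x=1..N-1. Q x) = (real k - 1 - eigval_angle k \<theta>) * S"
    unfolding S_def sum_distrib_left sum.distrib[symmetric] P_def Q_def M_def \<psi>_def
    by (intro sum.cong refl) (simp add: distrib_left[symmetric] kernels_sin[OF k])
  have diagonals: "(\<Sum>s=1..k-1. \<Sum>x=s..N-k+s. M x) = (real k - 1) * S
      - (\<Sum>s=1..k-1. \<Sum>x=1..s-1. M x) - (\<Sum>s=1..k-1. \<Sum>x=N-k+s+1..N-1. M x)"
    unfolding S_def using k kN by (rule sum_sliding_windows)
  have bulk: "(\<Sum>p=0..N-k. window_defect \<psi> k p g)
      = (\<Sum>x=1..N-k. P x) + (\<Sum>x=k..N-1. Q x) - (\<Sum>s=1..k-1. \<Sum>x=s..N-k+s. M x)"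
    unfolding P_def Q_def M_def by (rule sum_window_defects[OF g0 gN k kN])
  have right: "(\<Sum>x=N-k+1..N-1. P x) - (\<Sum>s=1..k-1. \<Sum>x=N-k+s+1..N-1. M x)
      - (\<Sum>i=2..k-1. delta k i * window_defect \<psi> i (N - i) g)
      = - cos (real N * \<theta>) * edge_defect \<psi> k (\<lambda>u. g (N - u))"
    unfolding P_def M_def \<psi>_def by (rule right_edge_reflect[where g = g, OF sin_N gN k kN])
  have left: "edge_defect \<psi> k g = (\<Sum>x=1..k-1. Q x) - (\<Sum>s=1..k-1. \<Sum>x=1..s-1. M x)
      - (\<Sum>i=2..k-1. delta k i * window_defect \<psi> i 0 g)"
    unfolding edge_defect_def Q_def M_def ..
  have "(\<Sum>x=1..N-1. g x * \<psi> (real x)) = S"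
    unfolding S_def M_def by (simp add: mult.commute)
  then show ?thesis
    using split_P split_Q kernels diagonals bulk right left
    by (simp add: distrib_left sum.distrib algebra_simps)
qed

section \<open>The edge defect vanishes on linear weights\<close>

lemma left_kernel_add_scaled:
  "left_kernel (\<lambda>t. a t + c * b t) k x = left_kernel a k x + c * left_kernel b k x"
  unfolding left_kernel_def sum_distrib_left sum.distrib[symmetric]
  by (intro sum.cong refl) (simp add: algebra_simps)

lemma window_defect_add_scaled:
  "window_defect (\<lambda>t. a t + c * b t) n p G = window_defect a n p G + c * window_defect b n p G"
  unfolding window_defect_def sum_distrib_left sum.distrib[symmetric]
  by (intro sum.cong refl) (simp add: algebra_simps)

lemma edge_defect_add_scaled:
  "edge_defect (\<lambda>t. a t + c * b t) k G = edge_defect a k G + c * edge_defect b k G"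
  unfolding edge_defect_def left_kernel_add_scaled window_defect_add_scaled
  by (simp add: sum.distrib sum_distrib_left algebra_simps)

lemma sum_triangle_swap:
  fixes f :: "nat \<Rightarrow> nat \<Rightarrow> 'a::comm_monoid_add"
  shows "(\<Sum>s=1..n. \<Sum>x=1..s-1. f s x) = (\<Sum>x=1..n. \<Sum>s=x+1..n. f s x)"
proof (induction n)
  case (Suc n)
  have "(\<Sum>x=1..Suc n. \<Sum>s=x+1..Suc n. f s x) = (\<Sum>x=1..n. \<Sum>s=x+1..Suc n. f s x)"
    by simp
  also have "\<dots> = (\<Sum>x=1..n. \<Sum>s=x+1..n. f s x) + (\<Sum>x=1..n. f (Suc n) x)"
    by (simp add: sum.distrib)
  also have "\<dots> = (\<Sum>s=1..Suc n. \<Sum>x=1..s-1. f s x)"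
    by (simp only: Suc.IH[symmetric]) simp
  finally show ?case ..
qed simp

lemma sum_first_naturals: "(\<Sum>s=1..n. real s) = real n * (real n + 1) / 2"
  by (induction n) (simp_all add: field_simps)

lemma sum_first_squares: "(\<Sum>s=1..n. real s * real s) = real n * (real n + 1) * (2 * real n + 1) / 6"
  by (induction n) (simp_all add: field_simps)

lemma delta_telescoping:
  assumes "1 \<le> i"
  shows "delta k i = 3 / 4 + (real k ^ 2 - 1 / 4) / 2 * (1 / (2 * real i - 1) - 1 / (2 * real (Suc i) - 1))"
proof -
  define P where "P = (2 * real i + 1) * (2 * real i - 1)"
  have "2 * real i - 1 \<noteq> 0" "2 * real i + 1 \<noteq> 0"
    using assms by auto
  then have "P \<noteq> 0"
    unfolding P_def by simp
  have reciprocals: "1 / (2 * real i - 1) - 1 / (2 * real (Suc i) - 1) = 2 / P"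
    using \<open>2 * real i - 1 \<noteq> 0\<close> \<open>2 * real i + 1 \<noteq> 0\<close> unfolding P_def by (simp add: field_simps)
  have "real k ^ 2 + 3 * real i ^ 2 - 1 = 3 / 4 * P + (real k ^ 2 - 1 / 4)"
    unfolding P_def by (simp add: algebra_simps power2_eq_square)
  then have "delta k i = (3 / 4 * P + (real k ^ 2 - 1 / 4)) / P"
    unfolding delta_def P_def by simp
  also have "\<dots> = 3 / 4 + (real k ^ 2 - 1 / 4) / 2 * (2 / P)"
    using \<open>P \<noteq> 0\<close> by (simp add: field_simps)
  finally show ?thesis
    unfolding reciprocals .
qed

lemma sum_delta_tail:
  assumes "1 \<le> x" and "x \<le> k - 1"
  shows "(\<Sum>i=x+1..k-1. delta k i)
    = 3 * (real k - 1 - real x) / 4 + (real k ^ 2 - 1 / 4) / 2 * (1 / (2 * real x + 1) - 1 / (2 * real k - 1))"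
proof -
  define f where "f i = 1 / (2 * real i - 1)" for i
  define c where "c = (real k ^ 2 - 1 / 4) / 2"
  have "(\<Sum>i=x+1..k-1. delta k i) = (\<Sum>i=x+1..k-1. 3 / 4 - c * (f (Suc i) - f i))"
    by (intro sum.cong refl) (simp add: delta_telescoping f_def c_def algebra_simps)
  also have "\<dots> = real (k - 1 - x) * (3 / 4) - c * (\<Sum>i=x+1..k-1. f (Suc i) - f i)"
    by (subst sum_distrib_left) (simp add: sum_subtractf)
  also have "\<dots> = real (k - 1 - x) * (3 / 4) - c * (f (Suc (k - 1)) - f (x + 1))"
    using assms by (simp add: sum_Suc_diff)
  also have "f (Suc (k - 1)) = 1 / (2 * real k - 1)"
    using assms by (simp add: f_def)
  also have "f (x + 1) = 1 / (2 * real x + 1)"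
    by (simp add: f_def algebra_simps)
  also have "real (k - 1 - x) = real k - 1 - real x"
    using assms by (simp add: of_nat_diff)
  finally show ?thesis
    unfolding c_def[symmetric] by (simp add: algebra_simps)
qed

lemma left_kernel_linear:
  assumes "1 \<le> k"
  shows "left_kernel (\<lambda>t. t) k x = (real x - real k) * (real k - 1) / 2 + (real k - 1) * (2 * real k - 1) / 6"
proof -
  have "left_kernel (\<lambda>t. t) k x
      = (\<Sum>s=1..k-1. real x - (1 + real x / real k) * real s + real s * real s / real k)"
    unfolding left_kernel_def using assms by (intro sum.cong refl) (simp add: field_simps)
  also have "\<dots> = real (k - 1) * real x - (1 + real x / real k) * (\<Sum>s=1..k-1. real s)
      + (\<Sum>s=1..k-1. real s * real s) / real k"
    by (simp add: sum.distrib sum_subtractf sum_distrib_left sum_divide_distrib)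
  also have "\<dots> = (real x - real k) * (real k - 1) / 2 + (real k - 1) * (2 * real k - 1) / 6"
    unfolding sum_first_naturals sum_first_squares using assms by (simp add: of_nat_diff field_simps)
  finally show ?thesis .
qed

lemma edge_defect_linear_coefficient:
  assumes "1 \<le> x" and "x \<le> k - 1"
  shows "left_kernel (\<lambda>t. t) k x - real (k - 1 - x) * real x
    - delta k x * (\<Sum>s=1..x-1. real s * real s / real x) + real x * (\<Sum>i=x+1..k-1. delta k i) = 0"
proof -
  define K where "K = real k"
  define X where "X = real x"
  have "X \<ge> 1" "K \<ge> 2"
    using assms unfolding K_def X_def by auto
  then have "2 * X + 1 \<noteq> 0" "2 * K - 1 \<noteq> 0"
    by auto
  have sum_squares: "(\<Sum>s=1..x-1. real s * real s / real x) = (X - 1) * (2 * X - 1) / 6"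
    unfolding sum_divide_distrib[symmetric] sum_first_squares using assms
    by (simp add: X_def of_nat_diff field_simps)
  have "2 * X - 1 \<noteq> 0"
    using \<open>X \<ge> 1\<close> by simp
  have cancel: "n / (c * b) * (a * b / 6) = n * a / (6 * c)" if "b \<noteq> 0" "c \<noteq> 0" for n a b c :: real
    using that by (simp add: field_simps)
  have squares: "delta k x * (\<Sum>s=1..x-1. real s * real s / real x)
      = (K^2 + 3 * X^2 - 1) * (X - 1) / (6 * (2 * X + 1))"
    unfolding sum_squares unfolding delta_def K_def[symmetric] X_def[symmetric]
    by (rule cancel) fact+
  moreover have tail: "(\<Sum>i=x+1..k-1. delta k i) = 3 * (K - 1 - X) / 4 + (4 * K^2 - 1) / (8 * (2 * X + 1)) - (2 * K + 1) / 8"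
  proof -
    have "K^2 - 1 / 4 = (2 * K - 1) * (2 * K + 1) / 4"
      by (simp add: algebra_simps power2_eq_square)
    then have "(K^2 - 1 / 4) / 2 * (1 / (2 * K - 1)) = (2 * K + 1) / 8"
      using \<open>2 * K - 1 \<noteq> 0\<close> by (simp add: field_simps)
    moreover have "(K^2 - 1 / 4) / 2 * (1 / (2 * X + 1)) = (4 * K^2 - 1) / (8 * (2 * X + 1))"
      using \<open>2 * X + 1 \<noteq> 0\<close> by (simp add: field_simps)
    ultimately show ?thesis
      unfolding sum_delta_tail[OF assms] K_def[symmetric] X_def[symmetric] right_diff_distrib by simp
  qed
  have diff: "real (k - 1 - x) = K - 1 - X"
    using assms unfolding K_def X_def by (simp add: of_nat_diff)
  have kernel: "left_kernel (\<lambda>t. t) k x = (X - K) * (K - 1) / 2 + (K - 1) * (2 * K - 1) / 6"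
    using left_kernel_linear[of k x] assms unfolding K_def X_def by simp
  show ?thesis
    unfolding squares tail diff kernel unfolding X_def[symmetric] using \<open>2 * X + 1 \<noteq> 0\<close>
    by (simp add: field_simps) (simp add: algebra_simps power2_eq_square power3_eq_cube)
qed

lemma sum_from_2_eq_sum_from_1:
  fixes f :: "nat \<Rightarrow> 'a::comm_monoid_add"
  assumes "f 1 = 0"
  shows "(\<Sum>i=2..m. f i) = (\<Sum>i=1..m. f i)"
  using assms sum.atLeast_Suc_atMost[of 1 m f] by (cases "m = 0") (simp_all add: numeral_2_eq_2)

lemma window_defect_linear_at_0:
  assumes "G 0 = 0"
  shows "window_defect (\<lambda>t. t) i 0 G
    = G i * (\<Sum>s=1..i-1. real s * real s / real i) - (\<Sum>s=1..i-1. real s * G s)"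
  unfolding window_defect_def sum_distrib_left sum_subtractf[symmetric] using assms
  by (intro sum.cong refl) (simp add: algebra_simps)

lemma edge_defect_linear:
  assumes "G 0 = 0"
  shows "edge_defect (\<lambda>t. t) k G = 0"
proof -
  let ?A = "\<lambda>i. \<Sum>s=1..i-1. real s * real s / real i"
  let ?D = "\<lambda>x. \<Sum>i=x+1..k-1. delta k i"
  have triangle: "(\<Sum>s=1..k-1. \<Sum>x=1..s-1. real x * G x) = (\<Sum>x=1..k-1. real (k - 1 - x) * real x * G x)"
    unfolding sum_triangle_swap by (intro sum.cong refl) simp
  have "(\<Sum>i=2..k-1. delta k i * window_defect (\<lambda>t. t) i 0 G)
      = (\<Sum>i=1..k-1. delta k i * (G i * ?A i - (\<Sum>s=1..i-1. real s * G s)))"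
    unfolding window_defect_linear_at_0[where G = G, OF assms]
    by (rule sum_from_2_eq_sum_from_1) simp
  also have "\<dots> = (\<Sum>i=1..k-1. delta k i * G i * ?A i) - (\<Sum>i=1..k-1. \<Sum>s=1..i-1. delta k i * (real s * G s))"
    by (simp add: sum_subtractf sum_distrib_left algebra_simps)
  also have "(\<Sum>i=1..k-1. \<Sum>s=1..i-1. delta k i * (real s * G s)) = (\<Sum>x=1..k-1. real x * G x * ?D x)"
    unfolding sum_triangle_swap by (simp add: sum_distrib_left algebra_simps)
  finally have edges: "(\<Sum>i=2..k-1. delta k i * window_defect (\<lambda>t. t) i 0 G)
      = (\<Sum>i=1..k-1. delta k i * G i * ?A i) - (\<Sum>x=1..k-1. real x * G x * ?D x)" .
  have "edge_defect (\<lambda>t. t) k G = (\<Sum>x=1..k-1. G x *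
      (left_kernel (\<lambda>t. t) k x - real (k - 1 - x) * real x - delta k x * ?A x + real x * ?D x))"
    unfolding edge_defect_def triangle edges by (simp add: sum_subtractf sum.distrib algebra_simps)
  also have "\<dots> = 0"
    using edge_defect_linear_coefficient by (intro sum.neutral) auto
  finally show ?thesis .
qed

section \<open>Cubic bounds\<close>

lemma abs_sum_le_card_bound:
  fixes f :: "'a \<Rightarrow> real"
  assumes "finite A" and "card A \<le> n" and "0 \<le> M" and "\<And>i. i \<in> A \<Longrightarrow> \<bar>f i\<bar> \<le> M"
  shows "\<bar>sum f A\<bar> \<le> real n * M"
proof -
  have "\<bar>sum f A\<bar> \<le> (\<Sum>i\<in>A. \<bar>f i\<bar>)"
    by (rule sum_abs)
  also have "\<dots> \<le> real (card A) * M"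
    using sum_bounded_above[of A "\<lambda>i. \<bar>f i\<bar>" M] assms(4) by simp
  also have "\<dots> \<le> real n * M"
    using assms(2,3) by (intro mult_right_mono) auto
  finally show ?thesis .
qed

lemma delta_nonneg:
  assumes "2 \<le> i"
  shows "0 \<le> delta k i"
proof -
  have "1 \<le> real i * real i"
    using assms mult_mono[of 1 "real i" 1 "real i"] by simp
  then have "0 \<le> real k ^ 2 + 3 * real i ^ 2 - 1"
    using zero_le_square[of "real k"] unfolding power2_eq_square by linarith
  then show ?thesis
    using assms unfolding delta_def by (intro divide_nonneg_pos) auto
qed

lemma delta_mult_square_le:
  assumes "2 \<le> i" and "i \<le> k"
  shows "delta k i * real i ^ 2 \<le> 2 * real k ^ 2"
proof -
  define J where "J = real i"
  define K where "K = real k"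
  have J: "2 \<le> J" "J \<le> K"
    using assms unfolding J_def K_def by auto
  then have "J * J \<le> K * K" "1 \<le> J * J"
    using mult_mono[of J K J K] mult_mono[of 1 J 1 J] by auto
  then have "J^2 * J^2 \<le> K^2 * J^2" "K^2 \<le> K^2 * J^2"
    using mult_left_mono[of 1 "J * J" "K * K"] by (auto intro!: mult_right_mono simp: power2_eq_square)
  moreover have "(K^2 + 3 * J^2 - 1) * J^2 = K^2 * J^2 + 3 * (J^2 * J^2) - J^2"
    "2 * K^2 * ((2 * J + 1) * (2 * J - 1)) = 8 * (K^2 * J^2) - 2 * K^2"
    by (simp_all add: algebra_simps power2_eq_square)
  ultimately have "(K^2 + 3 * J^2 - 1) * J^2 \<le> 2 * K^2 * ((2 * J + 1) * (2 * J - 1))"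
    using zero_le_power2[of J] zero_le_power2[of K] by linarith
  moreover have "(2 * J + 1) * (2 * J - 1) > 0"
    using J by simp
  ultimately show ?thesis
    unfolding delta_def J_def[symmetric] K_def[symmetric] by (simp add: pos_divide_le_eq)
qed

lemma cubic_bound_mono:
  fixes \<psi> :: "real \<Rightarrow> real"
  assumes "\<And>t. \<bar>\<psi> t\<bar> \<le> B * \<bar>t\<bar> ^ 3" and "\<bar>t\<bar> \<le> m"
  shows "\<bar>\<psi> t\<bar> \<le> B * m ^ 3"
proof -
  have "0 \<le> B"
    using assms(1)[of 1] by simp
  then have "B * \<bar>t\<bar> ^ 3 \<le> B * m ^ 3"
    using assms(2) by (intro mult_left_mono power_mono) auto
  then show ?thesis
    using assms(1)[of t] by linarith
qed

lemma left_kernel_cubic_bound: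
  assumes "\<And>t. \<bar>\<psi> t\<bar> \<le> B * \<bar>t\<bar> ^ 3" and "x \<le> k"
  shows "\<bar>left_kernel \<psi> k x\<bar> \<le> real k * (B * real k ^ 3)"
  unfolding left_kernel_def
proof (rule abs_sum_le_card_bound)
  show "0 \<le> B * real k ^ 3"
    using assms(1)[of 1] by simp
  fix s assume "s \<in> {1..k-1}"
  then have "\<bar>1 - real s / real k\<bar> \<le> 1" "\<bar>real x - real s\<bar> \<le> real k"
    using assms(2) by auto
  then show "\<bar>(1 - real s / real k) * \<psi> (real x - real s)\<bar> \<le> B * real k ^ 3"
    using cubic_bound_mono[OF assms(1)] \<open>0 \<le> B * real k ^ 3\<close> unfolding abs_mult
    by (metis mult_left_le_one_le abs_ge_zero mult_mono' order_trans)
qed simp_all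

lemma window_defect_at_0_cubic_bound:
  assumes \<psi>: "\<And>t. \<bar>\<psi> t\<bar> \<le> B * \<bar>t\<bar> ^ 3" and "G 0 = 0" and G: "\<And>x. x \<le> i \<Longrightarrow> \<bar>G x\<bar> \<le> real x"
  shows "\<bar>window_defect \<psi> i 0 G\<bar> \<le> real i * (B * real i ^ 3 * (2 * real i))"
  unfolding window_defect_def
proof (rule abs_sum_le_card_bound)
  have "0 \<le> B"
    using \<psi>[of 1] by simp
  then show "0 \<le> B * real i ^ 3 * (2 * real i)"
    by simp
  fix s assume s: "s \<in> {1..i-1}"
  have "\<bar>real s / real i * G i\<bar> \<le> 1 * real i"
    unfolding abs_mult using s G[of i] by (intro mult_mono) auto
  then have "\<bar>real s / real i * G i\<bar> \<le> real i"
    by simp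
  moreover have "\<bar>G s\<bar> \<le> real i"
    using s G[of s] by force
  moreover have "(1 - real s / real i) * G 0 + real s / real i * G (0 + i) - G (0 + s) = real s / real i * G i - G s"
    using \<open>G 0 = 0\<close> by simp
  ultimately have "\<bar>(1 - real s / real i) * G 0 + real s / real i * G (0 + i) - G (0 + s)\<bar> \<le> 2 * real i"
    using abs_triangle_ineq4[of "real s / real i * G i" "G s"] by (simp only:) (smt (verit))
  moreover have "\<bar>\<psi> (real (0 + s))\<bar> \<le> B * real i ^ 3"
    using s by (intro cubic_bound_mono[OF \<psi>]) auto
  ultimately show "\<bar>\<psi> (real (0 + s)) * ((1 - real s / real i) * G 0 + real s / real i * G (0 + i) - G (0 + s))\<bar>
      \<le> B * real i ^ 3 * (2 * real i)"
    unfolding abs_mult by (intro mult_mono) auto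
qed simp_all

lemma delta_window_defect_cubic_bound:
  assumes \<psi>: "\<And>t. \<bar>\<psi> t\<bar> \<le> B * \<bar>t\<bar> ^ 3" and "G 0 = 0" and G: "\<And>x. x \<le> k \<Longrightarrow> \<bar>G x\<bar> \<le> real x"
    and i: "2 \<le> i" "i \<le> k"
  shows "\<bar>delta k i * window_defect \<psi> i 0 G\<bar> \<le> 4 * B * real k ^ 5"
proof -
  have "0 \<le> B"
    using \<psi>[of 1] by simp
  have "\<bar>window_defect \<psi> i 0 G\<bar> \<le> real i * (B * real i ^ 3 * (2 * real i))"
    using G i by (intro window_defect_at_0_cubic_bound[where G = G, OF \<psi> \<open>G 0 = 0\<close>]) auto
  also have "\<dots> = 2 * B * real i ^ 2 * real i ^ 3"
    by (simp add: algebra_simps power2_eq_square power3_eq_cube)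
  finally have "\<bar>delta k i * window_defect \<psi> i 0 G\<bar> \<le> 2 * B * (delta k i * real i ^ 2) * real i ^ 3"
    using delta_nonneg[of i k] i unfolding abs_mult
    by (auto simp: algebra_simps dest: mult_left_mono[where c = "delta k i"])
  also have "\<dots> \<le> 2 * B * (2 * real k ^ 2) * real k ^ 3"
  proof -
    have "delta k i * real i ^ 2 \<le> 2 * real k ^ 2" "real i ^ 3 \<le> real k ^ 3"
      using i by (auto intro!: delta_mult_square_le power_mono)
    then have "delta k i * real i ^ 2 * real i ^ 3 \<le> 2 * real k ^ 2 * real k ^ 3"
      by (rule mult_mono) auto
    then have "2 * B * (delta k i * real i ^ 2 * real i ^ 3) \<le> 2 * B * (2 * real k ^ 2 * real k ^ 3)"
      using \<open>0 \<le> B\<close> by (intro mult_left_mono) auto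
    then show ?thesis
      by (simp only: mult.assoc)
  qed
  finally show ?thesis
    by (simp add: algebra_simps eval_nat_numeral)
qed

lemma edge_defect_cubic_bound:
  assumes \<psi>: "\<And>t. \<bar>\<psi> t\<bar> \<le> B * \<bar>t\<bar> ^ 3" and "G 0 = 0" and G: "\<And>x. x \<le> k \<Longrightarrow> \<bar>G x\<bar> \<le> real x"
  shows "\<bar>edge_defect \<psi> k G\<bar> \<le> 6 * B * real k ^ 6"
proof -
  define K where "K = real k"
  have "0 \<le> B"
    using \<psi>[of 1] by simp
  have kernel_term: "\<bar>\<Sum>x=1..k-1. G x * left_kernel \<psi> k x\<bar> \<le> K * (K * (K * (B * K ^ 3)))"
    unfolding K_def
  proof (rule abs_sum_le_card_bound)
    fix x assume x: "x \<in> {1..k-1}"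
    then have "\<bar>G x\<bar> \<le> real k"
      using G[of x] by force
    then show "\<bar>G x * left_kernel \<psi> k x\<bar> \<le> real k * (real k * (B * real k ^ 3))"
      unfolding abs_mult using x left_kernel_cubic_bound[OF \<psi>, of x k] by (intro mult_mono) auto
  qed (use \<open>0 \<le> B\<close> in auto)
  have triangle_term: "\<bar>\<Sum>s=1..k-1. \<Sum>x=1..s-1. \<psi> (real x) * G x\<bar> \<le> K * (K * (B * K ^ 3 * K))"
    unfolding K_def
  proof (rule abs_sum_le_card_bound)
    fix s assume s: "s \<in> {1..k-1}"
    show "\<bar>\<Sum>x=1..s-1. \<psi> (real x) * G x\<bar> \<le> real k * (B * real k ^ 3 * real k)"
    proof (rule abs_sum_le_card_bound)
      fix x assume "x \<in> {1..s-1}"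
      then have "x \<le> k"
        using s by auto
      then have "\<bar>\<psi> (real x)\<bar> \<le> B * real k ^ 3" "\<bar>G x\<bar> \<le> real k"
        using G[of x] by (auto intro!: cubic_bound_mono[OF \<psi>])
      then show "\<bar>\<psi> (real x) * G x\<bar> \<le> B * real k ^ 3 * real k"
        unfolding abs_mult using \<open>0 \<le> B\<close> by (intro mult_mono) auto
    qed (use s \<open>0 \<le> B\<close> in auto)
  qed (use \<open>0 \<le> B\<close> in auto)
  have delta_term: "\<bar>\<Sum>i=2..k-1. delta k i * window_defect \<psi> i 0 G\<bar> \<le> K * (4 * B * K ^ 5)"
    unfolding K_def
    using \<open>0 \<le> B\<close> G by (intro abs_sum_le_card_bound delta_window_defect_cubic_bound[where G = G, OF \<psi> \<open>G 0 = 0\<close>]) auto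
  have "\<bar>edge_defect \<psi> k G\<bar> \<le> K * (K * (K * (B * K ^ 3))) + K * (K * (B * K ^ 3 * K)) + K * (4 * B * K ^ 5)"
    unfolding edge_defect_def using kernel_term triangle_term delta_term by linarith
  also have "\<dots> = 6 * B * K ^ 6"
    by (simp add: algebra_simps eval_nat_numeral)
  finally show ?thesis
    unfolding K_def .
qed

lemma abs_sin_minus_le_cube: "\<bar>sin t - t\<bar> \<le> \<bar>t\<bar> ^ 3 / 6" for t :: real
  using Maclaurin_sin_bound[of t 3] by (simp add: sin_coeff_def numeral_3_eq_3 lessThan_Suc)

lemma edge_defect_sin_bound:
  assumes "G 0 = 0" and "\<And>x. x \<le> k \<Longrightarrow> \<bar>G x\<bar> \<le> real x"
  shows "\<bar>edge_defect (\<lambda>t. sin (t * \<theta>)) k G\<bar> \<le> real k ^ 6 * \<bar>\<theta>\<bar> ^ 3"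
proof -
  define e where "e t = sin (t * \<theta>) - t * \<theta>" for t
  have "(\<lambda>t. sin (t * \<theta>)) = (\<lambda>t. e t + \<theta> * t)"
    by (auto simp: e_def)
  then have "edge_defect (\<lambda>t. sin (t * \<theta>)) k G = edge_defect e k G"
    using edge_defect_add_scaled[of e \<theta> "\<lambda>t. t" k G] edge_defect_linear[where G = G, OF assms(1)] by simp
  moreover have "\<bar>e t\<bar> \<le> \<bar>\<theta>\<bar> ^ 3 / 6 * \<bar>t\<bar> ^ 3" for t
    using abs_sin_minus_le_cube[of "t * \<theta>"] by (simp add: e_def abs_mult power_mult_distrib mult.commute)
  ultimately show ?thesis
    using edge_defect_cubic_bound[of e "\<bar>\<theta>\<bar> ^ 3 / 6" G k] assms by (simp add: mult.commute)
qed

lemma prefix_count_bounds: "0 \<le> prefix_count \<eta> y x" "prefix_count \<eta> y x \<le> real x"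
  unfolding prefix_count_def
  using sum_nonneg[of "{1..x}" "\<lambda>z. if \<eta> z \<le> y then 1 else 0 :: real"]
    sum_mono[of "{1..x}" "\<lambda>z. if \<eta> z \<le> y then 1 else 0 :: real" "\<lambda>_. 1"] by auto

lemma prefix_count_permutes:
  assumes "\<eta> permutes {1..N}" and "y \<le> N"
  shows "prefix_count \<eta> y N = real y"
proof -
  have "prefix_count \<eta> y N = (\<Sum>z\<in>{1..N}. if z \<le> y then 1 else 0)"
    unfolding prefix_count_def using sum.permute[OF assms(1), of "\<lambda>l. if l \<le> y then 1 else 0 :: real"]
    by (simp add: comp_def)
  also have "\<dots> = (\<Sum>z\<in>{1..y}. 1)"
    using assms(2) by (intro sum.mono_neutral_cong_right) auto
  finally show ?thesis
    by simp
qed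

lemma height_at_N:
  assumes "\<eta> permutes {1..N}" and "y \<le> N" and "0 < N"
  shows "height N \<eta> N y = 0"
  using prefix_count_permutes[OF assms(1,2)] assms(3) by (simp add: height_eq_prefix_count)

lemma abs_height_le:
  assumes "y \<le> N"
  shows "\<bar>height N \<eta> x y\<bar> \<le> real x"
proof -
  have "real x * real y / real N \<le> real x"
    using assms by (cases "N = 0") (auto simp: divide_le_eq intro: mult_left_mono)
  moreover have "0 \<le> real x * real y / real N"
    by simp
  ultimately show ?thesis
    unfolding height_eq_prefix_count abs_le_iff using prefix_count_bounds[of \<eta> y x] by linarith
qed

lemma abs_height_reflect_le:
  assumes "\<eta> permutes {1..N}" and "y \<le> N" and "u \<le> N"
  shows "\<bar>height N \<eta> (N - u) y\<bar> \<le> real u"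
proof (cases "N = 0")
  case False
  define T where "T = (\<Sum>v=1..u. if \<eta> (N - u + v) \<le> y then 1 else 0 :: real)"
  have "prefix_count \<eta> y (N - u + u) = prefix_count \<eta> y (N - u) + T"
    unfolding T_def prefix_count_def by (rule sum_shift_add)
  then have "real y = prefix_count \<eta> y (N - u) + T"
    using prefix_count_permutes[OF assms(1,2)] assms(3) by simp
  moreover have "0 \<le> T" "T \<le> real u"
    unfolding T_def using sum_mono[of "{1..u}" "\<lambda>v. if \<eta> (N - u + v) \<le> y then 1 else 0 :: real" "\<lambda>_. 1"]
    by (auto intro: sum_nonneg)
  moreover have "real (N - u) * real y / real N = real y - real u * real y / real N"
    using False assms(3) by (simp add: of_nat_diff field_simps)
  moreover have "0 \<le> real u * real y / real N" "real u * real y / real N \<le> real u"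
    using False assms(2) by (auto simp: divide_le_eq intro: mult_left_mono)
  ultimately show ?thesis
    unfolding height_eq_prefix_count by linarith
qed (use assms in \<open>simp add: height_def\<close>)

section \<open>The eigenfunction estimate\<close>

lemma Phi_eigen_error_bound:
  assumes "1 \<le> k" and "k \<le> N" and "j \<in> {1..N}" and "y \<in> {1..N - 1}" and "\<sigma> permutes {1..N}"
  shows "\<bar>- gen_Lt N k (Phi N j y) \<sigma> - eigval N k j * Phi N j y \<sigma>\<bar>
    \<le> 2 * pi ^ 3 * real k ^ 6 * real j ^ 3 / real N ^ 3"
proof -
  define \<theta> where "\<theta> = real j * pi / real N"
  define g where "g x = height N \<sigma> x y" for x
  have "0 < N" "y \<le> N"
    using assms(3,4) by auto
  have \<psi>: "(\<lambda>t. sin (t * real j * pi / real N)) = (\<lambda>t. sin (t * \<theta>))"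
    by (simp add: \<theta>_def mult.assoc)
  have sin_N: "sin (real N * \<theta>) = 0"
    using \<open>0 < N\<close> sin_npi[of j] by (simp add: \<theta>_def)
  have g0: "g 0 = 0" and gN: "g N = 0"
    using height_at_N[OF assms(5) \<open>y \<le> N\<close> \<open>0 < N\<close>] by (simp_all add: g_def height_def)
  have "eigval N k j = eigval_angle k \<theta>"
    unfolding eigval_def eigval_angle_def \<theta>_def by (simp add: mult.assoc)
  moreover have "Phi N j y \<sigma> = (\<Sum>x=1..N-1. g x * sin (real x * \<theta>))"
    unfolding Phi_def g_def \<theta>_def by (simp add: mult.assoc)
  moreover note gen_Lt_Phi_eq_window_defects[OF assms(1,2), of j y \<sigma>]
  ultimately have "\<bar>- gen_Lt N k (Phi N j y) \<sigma> - eigval N k j * Phi N j y \<sigma>\<bar>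
      = \<bar>edge_defect (\<lambda>t. sin (t * \<theta>)) k g - cos (real N * \<theta>) * edge_defect (\<lambda>t. sin (t * \<theta>)) k (\<lambda>u. g (N - u))\<bar>"
    using window_defects_eigen_error[OF sin_N g0 gN assms(1,2)] unfolding \<psi> g_def[symmetric] by simp
  also have "\<dots> \<le> real k ^ 6 * \<bar>\<theta>\<bar> ^ 3 + 1 * (real k ^ 6 * \<bar>\<theta>\<bar> ^ 3)"
  proof (rule order_trans[OF abs_triangle_ineq4 add_mono])
    show "\<bar>edge_defect (\<lambda>t. sin (t * \<theta>)) k g\<bar> \<le> real k ^ 6 * \<bar>\<theta>\<bar> ^ 3"
      using g0 abs_height_le[OF \<open>y \<le> N\<close>] by (intro edge_defect_sin_bound) (auto simp: g_def)
    have "\<bar>edge_defect (\<lambda>t. sin (t * \<theta>)) k (\<lambda>u. g (N - u))\<bar> \<le> real k ^ 6 * \<bar>\<theta>\<bar> ^ 3"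
      using gN abs_height_reflect_le[OF assms(5) \<open>y \<le> N\<close>] assms(2)
      by (intro edge_defect_sin_bound) (auto simp: g_def)
    then show "\<bar>cos (real N * \<theta>) * edge_defect (\<lambda>t. sin (t * \<theta>)) k (\<lambda>u. g (N - u))\<bar>
        \<le> 1 * (real k ^ 6 * \<bar>\<theta>\<bar> ^ 3)"
      unfolding abs_mult by (intro mult_mono) auto
  qed
  also have "\<dots> = 2 * pi ^ 3 * real k ^ 6 * real j ^ 3 / real N ^ 3"
    using \<open>0 < N\<close> by (simp add: \<theta>_def power_divide power_mult_distrib field_simps)
  finally show ?thesis .
qed

lemma eventual_bound_imp_uniform_bound:
  fixes F B :: "nat \<Rightarrow> 'a \<Rightarrow> real"
  assumes "\<And>N. finite {p. P N p}" and B_pos: "\<And>N p. P N p \<Longrightarrow> 0 < B N p"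
    and eventually: "\<And>N p. N0 \<le> N \<Longrightarrow> P N p \<Longrightarrow> F N p \<le> c * B N p"
  shows "\<exists>C>0. \<forall>N p. P N p \<longrightarrow> F N p \<le> C * B N p"
proof -
  define R where "R N = (\<Sum>p\<in>{p. P N p}. \<bar>F N p\<bar> / B N p)" for N
  define C where "C = max c 0 + 1 + (\<Sum>N<N0. R N)"
  have R_nonneg: "0 \<le> R N" for N
    unfolding R_def by (intro sum_nonneg) (auto intro!: divide_nonneg_pos B_pos)
  have "0 \<le> (\<Sum>N<N0. R N)"
    using R_nonneg by (simp add: sum_nonneg)
  then have "C > 0" and "c \<le> C"
    unfolding C_def using max.cobounded1[of c 0] max.cobounded2[of 0 c] by linarith+
  moreover have "F N p \<le> C * B N p" if "P N p" for N p
  proof (cases "N0 \<le> N")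
    case True
    then show ?thesis
      using eventually[OF True that] B_pos[OF that] \<open>c \<le> C\<close> by (meson mult_right_mono less_imp_le order_trans)
  next
    case False
    have "\<bar>F N p\<bar> / B N p \<le> R N"
      unfolding R_def using assms(1) that by (intro member_le_sum) (auto intro!: divide_nonneg_pos B_pos)
    also have "\<dots> \<le> (\<Sum>N<N0. R N)"
      using False R_nonneg by (intro member_le_sum) auto
    also have "\<dots> \<le> C"
      unfolding C_def by simp
    finally show ?thesis
      using B_pos[OF that] by (simp add: divide_le_eq)
  qed
  ultimately show ?thesis
    by blast
qed

theorem lemma2p1:
  fixes k :: "nat \<Rightarrow> nat"
  assumes "(\<lambda>N. real (k N)) \<in> o(\<lambda>N. real N)"
    and "\<forall>N. k N \<ge> 1"
  shows "\<exists>C>0. \<forall>N j y \<sigma>. j \<in> {1..N} \<and> y \<in> {1..N - 1} \<and> \<sigma> permutes {1..N} \<longrightarrow>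
     \<bar>- gen_Lt N (k N) (Phi N j y) \<sigma> - eigval N (k N) j * Phi N j y \<sigma>\<bar>
       \<le> C * real (k N) ^ 6 * real j ^ 3 / real N ^ 3"
proof -
  \<comment> \<open>The little-o hypothesis is only needed to get \<open>k N \<le> N\<close> eventually.\<close>
  obtain N0 where k_le: "\<And>N. N0 \<le> N \<Longrightarrow> k N \<le> N"
    using landau_o.smallD[OF assms(1), of 1] by (auto simp: eventually_at_top_linorder)
  define P where "P N = (\<lambda>(j, y, \<sigma>). j \<in> {1..N} \<and> y \<in> {1..N - 1} \<and> \<sigma> permutes {1..N})" for N :: nat
  define B where "B N = (\<lambda>(j, y :: nat, \<sigma> :: nat \<Rightarrow> nat). real (k N) ^ 6 * real j ^ 3 / real N ^ 3)" for N
  define F where "F N = (\<lambda>(j, y, \<sigma>). \<bar>- gen_Lt N (k N) (Phi N j y) \<sigma> - eigval N (k N) j * Phi N j y \<sigma>\<bar>)" for N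
  have "finite {p. P N p}" for N
  proof (rule finite_subset)
    show "{p. P N p} \<subseteq> {1..N} \<times> {1..N - 1} \<times> {\<sigma>. \<sigma> permutes {1..N}}"
      by (auto simp: P_def)
  qed (simp add: finite_permutations)
  moreover have "0 < B N p" if "P N p" for N p
    using that assms(2)[rule_format, of N] by (auto simp: P_def B_def intro!: divide_pos_pos)
  moreover have "F N p \<le> 2 * pi ^ 3 * B N p" if "N0 \<le> N" "P N p" for N p
    using that assms(2) Phi_eigen_error_bound[OF _ k_le] by (auto simp: P_def B_def F_def mult.assoc)
  ultimately obtain C where "C > 0" "\<And>N p. P N p \<Longrightarrow> F N p \<le> C * B N p"
    using eventual_bound_imp_uniform_bound[of P B N0 F] by blast
  then show ?thesis
    by (auto simp: P_def B_def F_def mult.assoc)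
qed

end
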